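(* Consider the closed-loop lumped-parameter (0D) circulation model described in the context, and let its state functions be differentiable on $(0,T)$ and satisfy the system (i)–(iii) of the context for all $t\in(0,T)$. Then for all $t\in(0,T)$, $$\frac{d}{dt}\mathcal{M}(t)=\Pi^{\mathrm{act}}(t)+\Pi^{\mathrm{diss}}(t)+\Pi^{\mathrm{ex}}(t),$$ where $\mathcal{M},\Pi^{\mathrm{act}},\Pi^{\mathrm{diss}},\Pi^{\mathrm{ex}}$ are as defined in the context.
   Context: Chamber indices $i\in\{\mathrm{LA},\mathrm{LV},\mathrm{RA},\mathrm{RV}\}$ (left/right atrium/ventricle); vascular indices $j\in\{\mathrm{AR},\mathrm{VEN}\}$, $k\in\{\mathrm{SYS},\mathrm{PUL}\}$. Positive constants $C_j^k,R_j^k,L_j^k$, constants $V_{0,i}$ and $E_i^{\mathrm{pass}}>0$, given functions $E_i^{\mathrm{act}}(t)$ and $p_{\mathrm{EX}}(t)$, and for each valve $v\in\{\mathrm{MV},\mathrm{AV},\mathrm{TV},\mathrm{PV}\}$ a resistance function $R_v(p_1,p_2)=R_{\min}$ if $p_1<p_2$ and $R_{\max}$ if $p_1\ge p_2$, with $0<R_{\min}$, $R_{\max}<\infty$. Set $E_i(t)=E_i^{\mathrm{pass}}+E_i^{\mathrm{act}}(t)$. Unknowns: volumes $V_i(t)$, pressures $p_j^k(t)$, flows $Q_j^k(t)$. (i) Algebraic relations: $p_i=p_{\mathrm{EX}}+E_i(V_i-V_{0,i})$ for each chamber $i$; $Q_{\mathrm{MV}}=\frac{p_{\mathrm{LA}}-p_{\mathrm{LV}}}{R_{\mathrm{MV}}(p_{\mathrm{LA}},p_{\mathrm{LV}})}$,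 $Q_{\mathrm{AV}}=\frac{p_{\mathrm{LV}}-p_{\mathrm{AR}}^{\mathrm{SYS}}}{R_{\mathrm{AV}}(p_{\mathrm{LV}},p_{\mathrm{AR}}^{\mathrm{SYS}})}$, $Q_{\mathrm{TV}}=\frac{p_{\mathrm{RA}}-p_{\mathrm{RV}}}{R_{\mathrm{TV}}(p_{\mathrm{RA}},p_{\mathrm{RV}})}$, $Q_{\mathrm{PV}}=\frac{p_{\mathrm{RV}}-p_{\mathrm{AR}}^{\mathrm{PUL}}}{R_{\mathrm{PV}}(p_{\mathrm{RV}},p_{\mathrm{AR}}^{\mathrm{PUL}})}$. (ii) Chamber and compliance equations: $\dot V_{\mathrm{LA}}=Q_{\mathrm{VEN}}^{\mathrm{PUL}}-Q_{\mathrm{MV}}$, $\dot V_{\mathrm{LV}}=Q_{\mathrm{MV}}-Q_{\mathrm{AV}}$, $\dot V_{\mathrm{RA}}=Q_{\mathrm{VEN}}^{\mathrm{SYS}}-Q_{\mathrm{TV}}$, $\dot V_{\mathrm{RV}}=Q_{\mathrm{TV}}-Q_{\mathrm{PV}}$; $C_{\mathrm{AR}}^{\mathrm{SYS}}\dot p_{\mathrm{AR}}^{\mathrm{SYS}}=Q_{\mathrm{AV}}-Q_{\mathrm{AR}}^{\mathrm{SYS}}$, $C_{\mathrm{VEN}}^{\mathrm{SYS}}\dot p_{\mathrm{VEN}}^{\mathrm{SYS}}=Q_{\mathrm{AR}}^{\mathrm{SYS}}-Q_{\mathrm{VEN}}^{\mathrm{SYS}}$, $C_{\mathrm{AR}}^{\mathrm{PUL}}\dot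 p_{\mathrm{AR}}^{\mathrm{PUL}}=Q_{\mathrm{PV}}-Q_{\mathrm{AR}}^{\mathrm{PUL}}$, $C_{\mathrm{VEN}}^{\mathrm{PUL}}\dot p_{\mathrm{VEN}}^{\mathrm{PUL}}=Q_{\mathrm{AR}}^{\mathrm{PUL}}-Q_{\mathrm{VEN}}^{\mathrm{PUL}}$. (iii) Inductance equations: $\frac{L_{\mathrm{AR}}^{\mathrm{SYS}}}{R_{\mathrm{AR}}^{\mathrm{SYS}}}\dot Q_{\mathrm{AR}}^{\mathrm{SYS}}=-Q_{\mathrm{AR}}^{\mathrm{SYS}}-\frac{p_{\mathrm{VEN}}^{\mathrm{SYS}}-p_{\mathrm{AR}}^{\mathrm{SYS}}}{R_{\mathrm{AR}}^{\mathrm{SYS}}}$, $\frac{L_{\mathrm{VEN}}^{\mathrm{SYS}}}{R_{\mathrm{VEN}}^{\mathrm{SYS}}}\dot Q_{\mathrm{VEN}}^{\mathrm{SYS}}=-Q_{\mathrm{VEN}}^{\mathrm{SYS}}-\frac{p_{\mathrm{RA}}-p_{\mathrm{VEN}}^{\mathrm{SYS}}}{R_{\mathrm{VEN}}^{\mathrm{SYS}}}$, $\frac{L_{\mathrm{AR}}^{\mathrm{PUL}}}{R_{\mathrm{AR}}^{\mathrm{PUL}}}\dot Q_{\mathrm{AR}}^{\mathrm{PUL}}=-Q_{\mathrm{AR}}^{\mathrm{PUL}}-\frac{p_{\mathrm{VEN}}^{\mathrm{PUL}}-p_{\mathrm{AR}}^{\mathrm{PUL}}}{R_{\mathrm{AR}}^{\mathrm{PUL}}}$,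 $\frac{L_{\mathrm{VEN}}^{\mathrm{PUL}}}{R_{\mathrm{VEN}}^{\mathrm{PUL}}}\dot Q_{\mathrm{VEN}}^{\mathrm{PUL}}=-Q_{\mathrm{VEN}}^{\mathrm{PUL}}-\frac{p_{\mathrm{LA}}-p_{\mathrm{VEN}}^{\mathrm{PUL}}}{R_{\mathrm{VEN}}^{\mathrm{PUL}}}$. Energies and powers: $\mathcal{M}=\sum_i\mathcal{E}_i+\sum_{j,k}(\mathcal{E}_j^k+\mathcal{K}_j^k)$ with $\mathcal{E}_i=\tfrac12E_i^{\mathrm{pass}}(V_i-V_{0,i})^2$, $\mathcal{E}_j^k=\tfrac12C_j^k(p_j^k)^2$, $\mathcal{K}_j^k=\tfrac12L_j^k(Q_j^k)^2$. $\Pi^{\mathrm{act}}=\sum_i\Pi_i^{\mathrm{act}}$ with $\Pi_i^{\mathrm{act}}=-E_i^{\mathrm{act}}(V_i-V_{0,i})\dot V_i$. $\Pi^{\mathrm{ex}}=\sum_i(-p_{\mathrm{EX}}\dot V_i)$. $\Pi^{\mathrm{diss}}=\Pi_{\mathrm{MV}}+\Pi_{\mathrm{AV}}+\Pi_{\mathrm{TV}}+\Pi_{\mathrm{PV}}+\sum_{j,k}\Pi_j^k$, with $\Pi_j^k=-R_j^k(Q_j^k)^2$, $\Pi_{\mathrm{MV}}=-\frac{(p_{\mathrm{LA}}-p_{\mathrm{LV}})^2}{R_{\mathrm{MV}}(p_{\mathrm{LA}},p_{\mathrm{LV}})}$, $\Pi_{\mathrm{AV}}=-\frac{(p_{\mathrm{LV}}-p_{\mathrm{AR}}^{\mathrm{SYS}})^2}{R_{\mathrm{AV}}(p_{\mathrm{LV}},p_{\mathrm{AR}}^{\mathrm{SYS}})}$,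 $\Pi_{\mathrm{TV}}=-\frac{(p_{\mathrm{RA}}-p_{\mathrm{RV}})^2}{R_{\mathrm{TV}}(p_{\mathrm{RA}},p_{\mathrm{RV}})}$, $\Pi_{\mathrm{PV}}=-\frac{(p_{\mathrm{RV}}-p_{\mathrm{AR}}^{\mathrm{PUL}})^2}{R_{\mathrm{PV}}(p_{\mathrm{RV}},p_{\mathrm{AR}}^{\mathrm{PUL}})}$. *)

theory Defs
  imports "HOL-Analysis.Analysis"
begin

datatype chamber = LA | LV | RA | RV
datatype comp = AR | VEN
datatype circ = SYS | PUL
datatype valve = MV | AV | TV | PV

definition chambers :: "chamber set" where
  "chambers = {LA, LV, RA, RV}"

definition Rvalve :: "real \<Rightarrow> real \<Rightarrow> real \<Rightarrow> real \<Rightarrow> real" where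
  "Rvalve Rmin Rmax p1 p2 = (if p1 < p2 then Rmin else Rmax)"

definition M_energy ::
  "(chamber \<Rightarrow> real) \<Rightarrow> (chamber \<Rightarrow> real) \<Rightarrow> (comp \<Rightarrow> circ \<Rightarrow> real) \<Rightarrow> (comp \<Rightarrow> circ \<Rightarrow> real)
   \<Rightarrow> (chamber \<Rightarrow> real \<Rightarrow> real) \<Rightarrow> (comp \<Rightarrow> circ \<Rightarrow> real \<Rightarrow> real) \<Rightarrow> (comp \<Rightarrow> circ \<Rightarrow> real \<Rightarrow> real)
   \<Rightarrow> real \<Rightarrow> real" where
  "M_energy Epass V0 C L V p Q t =
     (\<Sum>i\<in>chambers. 1/2 * Epass i * (V i t - V0 i)^2)
   + (\<Sum>j\<in>{AR, VEN}. \<Sum>k\<in>{SYS, PUL}. 1/2 * C j k * (p j k t)^2 + 1/2 * L j k * (Q j k t)^2)"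

definition Pi_act ::
  "(chamber \<Rightarrow> real \<Rightarrow> real) \<Rightarrow> (chamber \<Rightarrow> real) \<Rightarrow> (chamber \<Rightarrow> real \<Rightarrow> real) \<Rightarrow> real \<Rightarrow> real" where
  "Pi_act Eact V0 V t = (\<Sum>i\<in>chambers. - (Eact i t * (V i t - V0 i) * deriv (V i) t))"

definition Pi_ex :: "(real \<Rightarrow> real) \<Rightarrow> (chamber \<Rightarrow> real \<Rightarrow> real) \<Rightarrow> real \<Rightarrow> real" where
  "Pi_ex pEX V t = (\<Sum>i\<in>chambers. - (pEX t * deriv (V i) t))"

text \<open>Dissipated power Pi^diss(t); pch are the chamber pressures p_i.\<close>
definition Pi_diss ::
  "real \<Rightarrow> real \<Rightarrow> (comp \<Rightarrow> circ \<Rightarrow> real) \<Rightarrow> (chamber \<Rightarrow> real \<Rightarrow> real)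
   \<Rightarrow> (comp \<Rightarrow> circ \<Rightarrow> real \<Rightarrow> real) \<Rightarrow> (comp \<Rightarrow> circ \<Rightarrow> real \<Rightarrow> real) \<Rightarrow> real \<Rightarrow> real" where
  "Pi_diss Rmin Rmax R pch p Q t =
     - ((pch LA t - pch LV t)^2 / Rvalve Rmin Rmax (pch LA t) (pch LV t))
     - ((pch LV t - p AR SYS t)^2 / Rvalve Rmin Rmax (pch LV t) (p AR SYS t))
     - ((pch RA t - pch RV t)^2 / Rvalve Rmin Rmax (pch RA t) (pch RV t))
     - ((pch RV t - p AR PUL t)^2 / Rvalve Rmin Rmax (pch RV t) (p AR PUL t))
     + (\<Sum>j\<in>{AR, VEN}. \<Sum>k\<in>{SYS, PUL}. - (R j k * (Q j k t)^2))"

end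

theory Submission
  imports Defs
begin

text \<open>
  Each storage element contributes (effort) \<times> (rate of its state) to dM/dt: the chamber
  pressure times dV for the elastances (after splitting off the active and external parts),
  p times the inflow-outflow balance for the capacitors, and Q times the pressure drop minus
  R Q for the inductors. Since every flow leaves one node and enters the next, the
  pressure-times-flow terms telescope around the closed loop, and only the resistive losses
  -R Q^2 and the valve losses -Q \<Delta>p = -\<Delta>p^2/R survive.
\<close>

lemma has_real_derivative_half_square:
  assumes "(f has_real_derivative f') (at t)"
  shows "((\<lambda>s. 1/2 * a * (f s)^2) has_real_derivative f t * (a * f')) (at t)"
  by (rule derivative_eq_intros assms refl)+ simp

lemma has_real_derivative_M_energy:
  assumes "\<forall>i. V i differentiable (at t)"
    and "\<forall>j k. p j k differentiable (at t) \<and> Q j k differentiable (at t)"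
  shows "(M_energy Epass V0 C L V p Q has_real_derivative
           (\<Sum>i\<in>chambers. (V i t - V0 i) * (Epass i * deriv (V i) t))
         + (\<Sum>j\<in>{AR, VEN}. \<Sum>k\<in>{SYS, PUL}.
              p j k t * (C j k * deriv (p j k) t) + Q j k t * (L j k * deriv (Q j k) t))) (at t)"
proof -
  have "\<And>f. f differentiable (at t) \<Longrightarrow> (f has_real_derivative deriv f t) (at t)"
    by (simp add: DERIV_deriv_iff_real_differentiable)
  with assms have dV: "\<And>i. (V i has_real_derivative deriv (V i) t) (at t)"
    and dp: "\<And>j k. (p j k has_real_derivative deriv (p j k) t) (at t)"
    and dQ: "\<And>j k. (Q j k has_real_derivative deriv (Q j k) t) (at t)"
    by blast+
  have "((\<lambda>s. V i s - V0 i) has_real_derivative deriv (V i) t) (at t)" for i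
    using DERIV_diff[OF dV DERIV_const] by simp
  then show ?thesis
    unfolding M_energy_def
    by (intro DERIV_add DERIV_sum has_real_derivative_half_square dp dQ)
qed

lemma elastance_power_split:
  assumes "\<forall>i. pch i t = pEX t + (Epass i + Eact i t) * (V i t - V0 i)"
  shows "(\<Sum>i\<in>chambers. (V i t - V0 i) * (Epass i * deriv (V i) t))
       = Pi_act Eact V0 V t + Pi_ex pEX V t + (\<Sum>i\<in>chambers. pch i t * deriv (V i) t)"
proof -
  have "(V i t - V0 i) * (Epass i * deriv (V i) t)
      = - (Eact i t * (V i t - V0 i) * deriv (V i) t) + - (pEX t * deriv (V i) t)
        + pch i t * deriv (V i) t" for i
    by (simp add: assms algebra_simps)
  then show ?thesis
    unfolding Pi_act_def Pi_ex_def by (simp only: sum.distrib)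
qed

text \<open>Also valid for r = 0 (x / 0 = 0).\<close>
lemma valve_power:
  fixes q dp r :: "'a :: field"
  assumes "q = dp / r"
  shows "dp^2 / r = q * dp"
  using assms by (simp add: power2_eq_square)

lemma Pi_diss_eq_flow_times_pressure_drop:
  assumes "Qv MV t = (pch LA t - pch LV t) / Rvalve Rmin Rmax (pch LA t) (pch LV t)"
    and "Qv AV t = (pch LV t - p AR SYS t) / Rvalve Rmin Rmax (pch LV t) (p AR SYS t)"
    and "Qv TV t = (pch RA t - pch RV t) / Rvalve Rmin Rmax (pch RA t) (pch RV t)"
    and "Qv PV t = (pch RV t - p AR PUL t) / Rvalve Rmin Rmax (pch RV t) (p AR PUL t)"
  shows "Pi_diss Rmin Rmax R pch p Q t =
           - Qv MV t * (pch LA t - pch LV t) - Qv AV t * (pch LV t - p AR SYS t)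
           - Qv TV t * (pch RA t - pch RV t) - Qv PV t * (pch RV t - p AR PUL t)
           - (\<Sum>j\<in>{AR, VEN}. \<Sum>k\<in>{SYS, PUL}. R j k * (Q j k t)^2)"
  unfolding Pi_diss_def valve_power[OF assms(1)] valve_power[OF assms(2)]
    valve_power[OF assms(3)] valve_power[OF assms(4)]
  by (simp add: sum_negf)

lemma inductor_law_cleared:
  fixes L R q dq dp :: "'a :: field"
  assumes "R \<noteq> 0" and "L / R * dq = - q - dp / R"
  shows "L * dq = - R * q - dp"
  using assms by (simp add: field_simps)

theorem proposition1:
  fixes T Rmin Rmax :: real
    and C R L :: "comp \<Rightarrow> circ \<Rightarrow> real"
    and V0 Epass :: "chamber \<Rightarrow> real"
    and Eact :: "chamber \<Rightarrow> real \<Rightarrow> real"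
    and pEX :: "real \<Rightarrow> real"
    and V pch :: "chamber \<Rightarrow> real \<Rightarrow> real"
    and p Q :: "comp \<Rightarrow> circ \<Rightarrow> real \<Rightarrow> real"
    and Qv :: "valve \<Rightarrow> real \<Rightarrow> real"
  assumes C_pos: "\<forall>j k. C j k > 0" and R_pos: "\<forall>j k. R j k > 0" and L_pos: "\<forall>j k. L j k > 0"
    and Epass_pos: "\<forall>i. Epass i > 0"
    and Rmin_pos: "0 < Rmin" and Rmax_pos: "0 < Rmax"
    and diff: "\<forall>t\<in>{0<..<T}. (\<forall>i. V i differentiable (at t))
                  \<and> (\<forall>j k. p j k differentiable (at t) \<and> Q j k differentiable (at t))"
    and p_ch: "\<forall>t\<in>{0<..<T}. \<forall>i. pch i t = pEX t + (Epass i + Eact i t) * (V i t - V0 i)"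
    and Q_MV: "\<forall>t\<in>{0<..<T}. Qv MV t = (pch LA t - pch LV t) / Rvalve Rmin Rmax (pch LA t) (pch LV t)"
    and Q_AV: "\<forall>t\<in>{0<..<T}. Qv AV t = (pch LV t - p AR SYS t) / Rvalve Rmin Rmax (pch LV t) (p AR SYS t)"
    and Q_TV: "\<forall>t\<in>{0<..<T}. Qv TV t = (pch RA t - pch RV t) / Rvalve Rmin Rmax (pch RA t) (pch RV t)"
    and Q_PV: "\<forall>t\<in>{0<..<T}. Qv PV t = (pch RV t - p AR PUL t) / Rvalve Rmin Rmax (pch RV t) (p AR PUL t)"
    and dV_LA: "\<forall>t\<in>{0<..<T}. deriv (V LA) t = Q VEN PUL t - Qv MV t"
    and dV_LV: "\<forall>t\<in>{0<..<T}. deriv (V LV) t = Qv MV t - Qv AV t"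
    and dV_RA: "\<forall>t\<in>{0<..<T}. deriv (V RA) t = Q VEN SYS t - Qv TV t"
    and dV_RV: "\<forall>t\<in>{0<..<T}. deriv (V RV) t = Qv TV t - Qv PV t"
    and dp_ARS: "\<forall>t\<in>{0<..<T}. C AR SYS * deriv (p AR SYS) t = Qv AV t - Q AR SYS t"
    and dp_VENS: "\<forall>t\<in>{0<..<T}. C VEN SYS * deriv (p VEN SYS) t = Q AR SYS t - Q VEN SYS t"
    and dp_ARP: "\<forall>t\<in>{0<..<T}. C AR PUL * deriv (p AR PUL) t = Qv PV t - Q AR PUL t"
    and dp_VENP: "\<forall>t\<in>{0<..<T}. C VEN PUL * deriv (p VEN PUL) t = Q AR PUL t - Q VEN PUL t"
    and dQ_ARS: "\<forall>t\<in>{0<..<T}. L AR SYS / R AR SYS * deriv (Q AR SYS) t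
                   = - Q AR SYS t - (p VEN SYS t - p AR SYS t) / R AR SYS"
    and dQ_VENS: "\<forall>t\<in>{0<..<T}. L VEN SYS / R VEN SYS * deriv (Q VEN SYS) t
                   = - Q VEN SYS t - (pch RA t - p VEN SYS t) / R VEN SYS"
    and dQ_ARP: "\<forall>t\<in>{0<..<T}. L AR PUL / R AR PUL * deriv (Q AR PUL) t
                   = - Q AR PUL t - (p VEN PUL t - p AR PUL t) / R AR PUL"
    and dQ_VENP: "\<forall>t\<in>{0<..<T}. L VEN PUL / R VEN PUL * deriv (Q VEN PUL) t
                   = - Q VEN PUL t - (pch LA t - p VEN PUL t) / R VEN PUL"
  shows "\<forall>t\<in>{0<..<T}.
           ((\<lambda>s. M_energy Epass V0 C L V p Q s) has_real_derivative
              (Pi_act Eact V0 V t + Pi_diss Rmin Rmax R pch p Q t + Pi_ex pEX V t)) (at t)"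
proof
  fix t assume t: "t \<in> {0<..<T}"
  note dM = has_real_derivative_M_energy[OF conjunct1[OF bspec[OF diff t]]
      conjunct2[OF bspec[OF diff t]]]
  note elastances = elastance_power_split[where pch = pch and V = V and Eact = Eact and pEX = pEX,
      OF bspec[OF p_ch t]]
  note valves = Q_MV Q_AV Q_TV Q_PV
  note chamber_flows = dV_LA dV_LV dV_RA dV_RV
  note capacitor_flows = dp_ARS dp_VENS dp_ARP dp_VENP
  note inductor_laws = dQ_ARS dQ_VENS dQ_ARP dQ_VENP
  have network: "(\<Sum>i\<in>chambers. pch i t * deriv (V i) t)
      + (\<Sum>j\<in>{AR, VEN}. \<Sum>k\<in>{SYS, PUL}.
           p j k t * (C j k * deriv (p j k) t) + Q j k t * (L j k * deriv (Q j k) t))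
      = Pi_diss Rmin Rmax R pch p Q t"
    unfolding chambers_def Pi_diss_eq_flow_times_pressure_drop[where Qv = Qv and pch = pch and p = p,
      OF valves[rule_format, OF t]]
    using R_pos[rule_format, THEN less_imp_neq, THEN not_sym]
    by (simp add: chamber_flows[rule_format, OF t] capacitor_flows[rule_format, OF t]
        inductor_laws[rule_format, OF t, THEN inductor_law_cleared[rotated]],
        simp add: algebra_simps power2_eq_square)
  show "(M_energy Epass V0 C L V p Q has_real_derivative
      Pi_act Eact V0 V t + Pi_diss Rmin Rmax R pch p Q t + Pi_ex pEX V t) (at t)"
    by (rule DERIV_cong[OF dM]) (use elastances network in linarith)
qed

end
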